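(* Let $G^\sigma$ be a connected oriented unicyclic graph of even order $n$ with cycle $C_k^\sigma$. Then $S(G^\sigma)$ is nonsingular if and only if either $G^\sigma\in\mathscr{U}_1$ and $G^\sigma$ has a perfect matching, or $G^\sigma\in\mathscr{U}_2$, $C_k^\sigma$ is oddly-oriented and $G^\sigma-C_k^\sigma$ has a perfect matching.
   Context: An oriented graph $G^\sigma$ is a simple graph with an orientation of each edge. Its skew-adjacency matrix $S(G^\sigma)=(s_{ij})$ has $s_{ij}=1$ if there is an arc from $v_i$ to $v_j$, $s_{ij}=-1$ if there is an arc from $v_j$ to $v_i$, and $0$ otherwise. For an even cycle $u_1\cdots u_ku_1$, its sign is the sign of $\prod_{i=1}^k s_{u_iu_{i+1}}$ ($u_{k+1}=u_1$); it is oddly-oriented if this sign is negative. A $\delta$-transformation deletes a pendant vertex (degree one) together with its unique neighbor and all incident edges. With $k$ the girth, $\mathscr{U}_1$ is the set of oriented unicyclic graphs of order $n$ with girth $k$ that can be transformed into a graph without edges by finitely many $\delta$-transformations; $\mathscr{U}_2$ is the set of those that can be transformed into $C_k^\sigma$ or the disjoint union of $C_k^\sigma$ with isolated vertices by finitely many $\delta$-transformations. $G^\sigma-C_k^\sigma$ is obtained by deleting the cycle's vertices and incident edges. *)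

theory Defs
  imports "HOL-Analysis.Analysis"
begin

text \<open>An oriented graph on the finite vertex type 'n (vertex set = UNIV) is given
by its arc set A: (u,v) \<in> A means an arc from u to v.\<close>

definition oriented_graph :: "('n \<times> 'n) set \<Rightarrow> bool" where
  "oriented_graph A \<longleftrightarrow> (\<forall>u. (u,u) \<notin> A) \<and> (\<forall>u v. (u,v) \<in> A \<longrightarrow> (v,u) \<notin> A)"

definition adj :: "('n \<times> 'n) set \<Rightarrow> 'n \<Rightarrow> 'n \<Rightarrow> bool" where
  "adj A u v \<longleftrightarrow> (u,v) \<in> A \<or> (v,u) \<in> A"

definition edges :: "('n \<times> 'n) set \<Rightarrow> 'n set set" where
  "edges A = {{u,v} | u v. (u,v) \<in> A}"

definition skew_entry :: "('n \<times> 'n) set \<Rightarrow> 'n \<Rightarrow> 'n \<Rightarrow> real" where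
  "skew_entry A u v = (if (u,v) \<in> A then 1 else if (v,u) \<in> A then -1 else 0)"

definition skew_adj :: "('n::finite \<times> 'n) set \<Rightarrow> real^'n^'n" where
  "skew_adj A = (\<chi> i j. skew_entry A i j)"

definition connected_graph :: "('n \<times> 'n) set \<Rightarrow> bool" where
  "connected_graph A \<longleftrightarrow> (\<forall>u v. (adj A)\<^sup>*\<^sup>* u v)"

definition unicyclic :: "('n::finite \<times> 'n) set \<Rightarrow> bool" where
  "unicyclic A \<longleftrightarrow> connected_graph A \<and> card (edges A) = CARD('n)"

definition is_cycle :: "('n \<times> 'n) set \<Rightarrow> 'n list \<Rightarrow> bool" where
  "is_cycle A c \<longleftrightarrow> distinct c \<and> length c \<ge> 3 \<and>
     (\<forall>i < length c. adj A (c ! i) (c ! ((i + 1) mod length c)))"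

definition oddly_oriented :: "('n \<times> 'n) set \<Rightarrow> 'n list \<Rightarrow> bool" where
  "oddly_oriented A c \<longleftrightarrow> even (length c) \<and>
     (\<Prod>i < length c. skew_entry A (c ! i) (c ! ((i + 1) mod length c))) < 0"

definition has_perfect_matching :: "('n \<times> 'n) set \<Rightarrow> 'n set \<Rightarrow> bool" where
  "has_perfect_matching A W \<longleftrightarrow> (\<exists>M. M \<subseteq> edges A \<and> (\<forall>e \<in> M. e \<subseteq> W) \<and>
      (\<forall>w \<in> W. \<exists>!e. e \<in> M \<and> w \<in> e))"

definition delta_step :: "('n \<times> 'n) set \<Rightarrow> 'n set \<Rightarrow> 'n set \<Rightarrow> bool" where
  "delta_step A W W' \<longleftrightarrow> (\<exists>u v. u \<in> W \<and> {w \<in> W. adj A u w} = {v} \<and> W' = W - {u, v})"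

definition in_U1 :: "('n \<times> 'n) set \<Rightarrow> bool" where
  "in_U1 A \<longleftrightarrow> (\<exists>W. (delta_step A)\<^sup>*\<^sup>* UNIV W \<and> (\<forall>u \<in> W. \<forall>w \<in> W. \<not> adj A u w))"

definition in_U2 :: "('n \<times> 'n) set \<Rightarrow> 'n list \<Rightarrow> bool" where
  "in_U2 A c \<longleftrightarrow> (\<exists>W. (delta_step A)\<^sup>*\<^sup>* UNIV W \<and> set c \<subseteq> W \<and>
      (\<forall>u \<in> W. \<forall>w \<in> W. adj A u w \<longrightarrow> u \<in> set c \<and> w \<in> set c))"

end

theory Submission
  imports Defs
begin

text \<open>If u is a pendant vertex with neighbour v, the u-row of S forces the v-coordinate of a
  kernel vector to vanish, and the v-row can always be solved for the u-coordinate. Hence a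
  delta-transformation preserves nonsingularity, and the matching edge uv extends perfect
  matchings. A nonsingular graph reduces to a vertex set without pendant or isolated vertices,
  which in a unicyclic graph is empty or the cycle. On an even cycle the kernel equations link
  vertices two steps apart, and going once around multiplies by the sign of the cycle; so the
  cycle is nonsingular exactly when it is oddly oriented.\<close>

section \<open>Kernels of principal submatrices and delta-transformations\<close>

text \<open>Nonsingularity of the principal submatrix of S indexed by W, as a trivial kernel.\<close>
definition skew_nonsingular_on :: "('n \<times> 'n) set \<Rightarrow> 'n set \<Rightarrow> bool" where
  "skew_nonsingular_on A W \<longleftrightarrow>
     (\<forall>x::'n \<Rightarrow> real. (\<forall>i\<in>W. (\<Sum>j\<in>W. skew_entry A i j * x j) = 0) \<longrightarrow> (\<forall>j\<in>W. x j = 0))"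

lemma det_nonzero_iff_trivial_kernel:
  "det (M::real^'n^'n) \<noteq> 0 \<longleftrightarrow> (\<forall>x. M *v x = 0 \<longrightarrow> x = 0)"
  by (metis invertible_det_nz invertible_left_inverse matrix_left_invertible_ker)

lemma det_skew_adj_nonzero_iff:
  "det (skew_adj A) \<noteq> 0 \<longleftrightarrow> skew_nonsingular_on A (UNIV::'n::finite set)"
proof -
  have row: "(skew_adj A *v v) $ i = (\<Sum>j\<in>UNIV. skew_entry A i j * v $ j)" for v :: "real^'n" and i
    by (simp add: skew_adj_def matrix_vector_mult_def)
  have "(skew_adj A *v v = 0) \<longleftrightarrow> (\<forall>i. (\<Sum>j\<in>UNIV. skew_entry A i j * (\<lambda>j. v $ j) j) = 0)"
    for v :: "real^'n"
    by (simp add: vec_eq_iff row)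
  moreover have "(\<lambda>j. (\<chi> j. x j) $ j) = x" for x :: "'n \<Rightarrow> real"
    by simp
  ultimately show ?thesis
    unfolding det_nonzero_iff_trivial_kernel skew_nonsingular_on_def
    by (metis (no_types, lifting) UNIV_I vec_eq_iff zero_index)
qed

lemma skew_entry_antisym: "oriented_graph A \<Longrightarrow> skew_entry A a b = - skew_entry A b a"
  by (auto simp: oriented_graph_def skew_entry_def)

lemma skew_entry_eq_0_iff: "oriented_graph A \<Longrightarrow> skew_entry A a b = 0 \<longleftrightarrow> \<not> adj A a b"
  by (auto simp: oriented_graph_def adj_def skew_entry_def)

lemma abs_skew_entry_adj: "adj A a b \<Longrightarrow> \<bar>skew_entry A a b\<bar> = 1"
  by (auto simp: adj_def skew_entry_def)

lemma adj_commute: "adj A a b \<longleftrightarrow> adj A b a"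
  by (auto simp: adj_def)

lemma adj_irrefl: "oriented_graph A \<Longrightarrow> adj A a b \<Longrightarrow> a \<noteq> b"
  by (auto simp: oriented_graph_def adj_def)

lemma adj_imp_edge: "adj A a b \<Longrightarrow> {a, b} \<in> edges A"
  unfolding adj_def edges_def by (auto simp: insert_commute)

lemma edgeE:
  assumes "e \<in> edges A"
  obtains a b where "e = {a, b}" "adj A a b"
  using assms unfolding adj_def edges_def by auto

lemma delta_stepE:
  assumes "delta_step A W W'"
  obtains u v where "u \<in> W" "{w \<in> W. adj A u w} = {v}" "W' = W - {u, v}"
  using assms unfolding delta_step_def by blast

lemma sum_remove_two:
  assumes "finite W" "u \<in> W" "v \<in> W" "u \<noteq> v"
  shows "sum f W = f u + f v + sum f (W - {u, v})"
proof -
  have "W = insert u (insert v (W - {u, v}))" using assms by auto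
  then have "sum f W = sum f (insert u (insert v (W - {u, v})))" by simp
  also have "\<dots> = f u + f v + sum f (W - {u, v})" using assms by (simp add: add.assoc)
  finally show ?thesis .
qed

lemma skew_nonsingular_on_delete_pendant:
  fixes A :: "('n::finite \<times> 'n) set"
  assumes og: "oriented_graph A" and u: "u \<in> W" and nb: "{w \<in> W. adj A u w} = {v}"
  shows "skew_nonsingular_on A W \<longleftrightarrow> skew_nonsingular_on A (W - {u, v})"
proof -
  let ?e = "skew_entry A" and ?W = "W - {u, v}"
  have v: "v \<in> W" "adj A u v" using nb by auto
  have uv: "u \<noteq> v" using adj_irrefl[OF og v(2)] .
  have e_u: "?e u w = 0" "?e w u = 0" if "w \<in> W" "w \<noteq> v" for w
  proof -
    have "\<not> adj A u w" using that nb by blast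
    then show "?e u w = 0" "?e w u = 0" using og by (simp_all add: skew_entry_eq_0_iff adj_commute)
  qed
  have e_uv: "?e u v \<noteq> 0" "?e v u \<noteq> 0" using v(2) og by (auto simp: skew_entry_eq_0_iff adj_commute)
  have e_diag: "?e u u = 0" "?e v v = 0" using og adj_irrefl[OF og] by (metis skew_entry_eq_0_iff)+
  have split: "sum f W = f u + f v + sum f ?W" for f :: "'n \<Rightarrow> real"
    using sum_remove_two[OF _ u v(1) uv] by simp
  have row_u: "(\<Sum>j\<in>?W. ?e u j * x j) = 0" for x
    by (rule sum.neutral) (auto simp: e_u)
  show ?thesis
  proof
    assume K: "skew_nonsingular_on A W"
    show "skew_nonsingular_on A ?W" unfolding skew_nonsingular_on_def
    proof (intro allI impI)
      fix y :: "'n \<Rightarrow> real"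
      assume R: "\<forall>i\<in>?W. (\<Sum>j\<in>?W. ?e i j * y j) = 0"
      define x where "x = y(v := 0, u := - (\<Sum>j\<in>?W. ?e v j * y j) / ?e v u)"
      have x_W: "(\<Sum>j\<in>?W. ?e i j * x j) = (\<Sum>j\<in>?W. ?e i j * y j)" for i
        by (rule sum.cong) (auto simp: x_def)
      have xu: "x u = - (\<Sum>j\<in>?W. ?e v j * y j) / ?e v u" and xv: "x v = 0"
        using uv by (simp_all add: x_def)
      have "\<forall>i\<in>W. (\<Sum>j\<in>W. ?e i j * x j) = 0"
      proof
        fix i assume "i \<in> W"
        then consider "i = u" | "i = v" | "i \<in> ?W" by auto
        then show "(\<Sum>j\<in>W. ?e i j * x j) = 0"
        proof cases
          case 1
          then show ?thesis using row_u[of x] by (simp add: split e_diag xv)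
        next
          case 2
          then show ?thesis using e_uv by (simp add: split e_diag xv xu x_W)
        next
          case 3
          then show ?thesis using R e_u[of i] by (simp add: split xv x_W)
        qed
      qed
      then have "\<forall>j\<in>W. x j = 0" using K by (simp add: skew_nonsingular_on_def)
      moreover have "x j = y j" if "j \<in> ?W" for j using that by (simp add: x_def)
      ultimately show "\<forall>j\<in>?W. y j = 0" by auto
    qed
  next
    assume K: "skew_nonsingular_on A ?W"
    show "skew_nonsingular_on A W" unfolding skew_nonsingular_on_def
    proof (intro allI impI)
      fix x :: "'n \<Rightarrow> real"
      assume R: "\<forall>i\<in>W. (\<Sum>j\<in>W. ?e i j * x j) = 0"
      have "(\<Sum>j\<in>W. ?e u j * x j) = 0" using R u by blast
      then have "?e u v * x v = 0" using row_u[of x] by (simp add: split e_diag)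
      then have xv: "x v = 0" using e_uv by simp
      have "\<forall>i\<in>?W. (\<Sum>j\<in>?W. ?e i j * x j) = 0"
      proof
        fix i assume "i \<in> ?W"
        then show "(\<Sum>j\<in>?W. ?e i j * x j) = 0"
          using R[rule_format, of i] e_u[of i] by (simp add: split xv)
      qed
      then have z: "\<forall>j\<in>?W. x j = 0" using K by (simp add: skew_nonsingular_on_def)
      moreover have "(\<Sum>j\<in>W. ?e v j * x j) = 0" using R v(1) by blast
      ultimately have "?e v u * x u = 0" by (simp add: split e_diag xv)
      then show "\<forall>j\<in>W. x j = 0" using z xv e_uv by auto
    qed
  qed
qed

lemma skew_nonsingular_on_delta_chain:
  fixes A :: "('n::finite \<times> 'n) set"
  assumes "(delta_step A)\<^sup>*\<^sup>* V W" "oriented_graph A"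
  shows "skew_nonsingular_on A V \<longleftrightarrow> skew_nonsingular_on A W"
  using assms(1)
  by induction (auto elim!: delta_stepE simp: skew_nonsingular_on_delete_pendant[OF assms(2)])

lemma delta_chain_subset: "(delta_step A)\<^sup>*\<^sup>* V W \<Longrightarrow> W \<subseteq> V"
  by (induction rule: rtranclp_induct) (auto elim!: delta_stepE)

lemma delta_chain_even_card:
  assumes "(delta_step A)\<^sup>*\<^sup>* V W" "oriented_graph A" "finite V" "even (card V)"
  shows "even (card W)"
  using assms(1)
proof induction
  case (step W1 W2)
  obtain u v where u: "u \<in> W1" and nb: "{w \<in> W1. adj A u w} = {v}" and W2: "W2 = W1 - {u, v}"
    using step(2) by (rule delta_stepE)
  have "v \<in> W1" "u \<noteq> v" using nb adj_irrefl[OF assms(2)] by auto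
  moreover have "finite W1" using delta_chain_subset[OF step(1)] assms(3) finite_subset by blast
  ultimately have "card W1 = card W2 + 2"
    using u W2 card_mono[of W1 "{u, v}"] by (simp add: card_Diff_subset)
  then show ?case using step(3) by simp
qed (simp add: assms)

lemma skew_singular_on_isolated:
  assumes "w \<in> W" "finite W" "\<forall>y\<in>W. \<not> adj A w y"
  shows "\<not> skew_nonsingular_on A W"
proof
  assume K: "skew_nonsingular_on A W"
  define x where "x j = (if j = w then 1 else 0 :: real)" for j
  have "(\<Sum>j\<in>W. skew_entry A i j * x j) = 0" if "i \<in> W" for i
  proof -
    have "(\<Sum>j\<in>W. skew_entry A i j * x j) = skew_entry A i w"
      using assms(1,2) by (simp add: x_def if_distrib cong: if_cong)
    also have "\<dots> = 0" using assms(3) that by (auto simp: skew_entry_def adj_def)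
    finally show ?thesis .
  qed
  then have "x w = 0" using K assms(1) unfolding skew_nonsingular_on_def by blast
  then show False by (simp add: x_def)
qed

lemma delta_irreducible_reachable:
  assumes "finite V"
  obtains W where "(delta_step A)\<^sup>*\<^sup>* V W" "\<forall>u\<in>W. \<forall>v. {w \<in> W. adj A u w} \<noteq> {v}"
proof -
  obtain W where W: "(delta_step A)\<^sup>*\<^sup>* V W"
    and least: "\<And>W'. (delta_step A)\<^sup>*\<^sup>* V W' \<Longrightarrow> card W \<le> card W'"
    using ex_has_least_nat[of "\<lambda>W. (delta_step A)\<^sup>*\<^sup>* V W" V card] by blast
  have "{w \<in> W. adj A u w} \<noteq> {v}" if u: "u \<in> W" for u v
  proof
    assume nb: "{w \<in> W. adj A u w} = {v}"
    then have "(delta_step A)\<^sup>*\<^sup>* V (W - {u, v})"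
      using W u unfolding delta_step_def by (blast intro: rtranclp.rtrancl_into_rtrancl)
    moreover have "finite W" using delta_chain_subset[OF W] assms finite_subset by blast
    then have "card (W - {u, v}) < card W" using u by (intro psubset_card_mono) auto
    ultimately show False using least by fastforce
  qed
  then show ?thesis using that W by blast
qed

lemma two_neighbours_of_nonsingular:
  assumes "skew_nonsingular_on A W" "finite W" "\<forall>u\<in>W. \<forall>v. {w \<in> W. adj A u w} \<noteq> {v}" "u \<in> W"
  shows "\<exists>a\<in>W. \<exists>b\<in>W. a \<noteq> b \<and> adj A u a \<and> adj A u b"
proof -
  obtain a where a: "a \<in> W" "adj A u a"
    using skew_singular_on_isolated[OF assms(4,2)] assms(1) by blast
  moreover obtain b where "b \<in> W" "adj A u b" "b \<noteq> a"
    using assms(3,4) a by blast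
  ultimately show ?thesis by blast
qed

section \<open>Perfect matchings along delta-transformations\<close>

lemma has_perfect_matchingE:
  assumes "has_perfect_matching A W"
  obtains M where "M \<subseteq> edges A" "\<forall>e\<in>M. e \<subseteq> W" "\<forall>w\<in>W. \<exists>!e. e \<in> M \<and> w \<in> e"
  using assms unfolding has_perfect_matching_def by (elim exE conjE) (rule that)

lemma has_perfect_matching_insert_edge:
  assumes "has_perfect_matching A W" "adj A u v" "u \<notin> W" "v \<notin> W"
  shows "has_perfect_matching A (W \<union> {u, v})"
proof -
  obtain M where M: "M \<subseteq> edges A" "\<forall>e\<in>M. e \<subseteq> W" "\<forall>w\<in>W. \<exists>!e. e \<in> M \<and> w \<in> e"
    using assms(1) by (rule has_perfect_matchingE)
  have unique: "\<exists>!e. e \<in> insert {u, v} M \<and> w \<in> e" if w: "w \<in> W \<union> {u, v}" for w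
  proof (cases "w \<in> W")
    case True
    obtain e where e: "e \<in> M \<and> w \<in> e" and uniq: "\<forall>e'. e' \<in> M \<and> w \<in> e' \<longrightarrow> e' = e"
      using M(3)[rule_format, OF True] by (rule ex1E)
    have "w \<notin> {u, v}" using True assms(3,4) by blast
    show ?thesis
    proof (rule ex1I[of _ e])
      fix y assume "y \<in> insert {u, v} M \<and> w \<in> y"
      then show "y = e" using uniq \<open>w \<notin> {u, v}\<close> by blast
    qed (use e in blast)
  next
    case False
    then have "w \<in> {u, v}" using w by blast
    moreover have "y \<notin> M" if "w \<in> y" for y using that M(2) False by blast
    ultimately show ?thesis by (intro ex1I[of _ "{u, v}"]) blast+
  qed
  have edges: "insert {u, v} M \<subseteq> edges A" using M(1) adj_imp_edge[OF assms(2)] by blast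
  have inside: "e \<subseteq> W \<union> {u, v}" if "e \<in> insert {u, v} M" for e using that M(2) by blast
  show ?thesis unfolding has_perfect_matching_def
    by (intro exI[of _ "insert {u, v} M"] conjI ballI) (rule edges | erule inside unique)+
qed

lemma has_perfect_matching_remove_pendant:
  assumes "has_perfect_matching A W" "u \<in> W" "{w \<in> W. adj A u w} \<subseteq> {v}"
  shows "has_perfect_matching A (W - {u, v})"
proof -
  obtain M where M: "M \<subseteq> edges A" "\<forall>e\<in>M. e \<subseteq> W" "\<forall>w\<in>W. \<exists>!e. e \<in> M \<and> w \<in> e"
    using assms(1) by (rule has_perfect_matchingE)
  obtain e where e: "e \<in> M \<and> u \<in> e" and uniq_u: "\<forall>e'. e' \<in> M \<and> u \<in> e' \<longrightarrow> e' = e"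
    using M(3)[rule_format, OF assms(2)] by (rule ex1E)
  have e_uv: "e = {u, v}"
  proof -
    obtain a b where "e = {a, b}" "adj A a b" using e M(1) by (blast elim: edgeE)
    then obtain y where y: "e = {u, y}" "adj A u y" using e by (auto simp: adj_commute)
    then have "y \<in> W" using M(2) e by blast
    then show ?thesis using y assms(3) by blast
  qed
  have "v \<in> W" using M(2) e e_uv by blast
  obtain e' where "e' \<in> M \<and> v \<in> e'" and uniq_v: "\<forall>e''. e'' \<in> M \<and> v \<in> e'' \<longrightarrow> e'' = e'"
    using M(3)[rule_format, OF \<open>v \<in> W\<close>] by (rule ex1E)
  then have uniq_v': "\<forall>e''. e'' \<in> M \<and> v \<in> e'' \<longrightarrow> e'' = e" using e e_uv by blast
  have unique: "\<exists>!e'. e' \<in> M - {e} \<and> w \<in> e'" if "w \<in> W - {u, v}" for w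
  proof -
    have wW: "w \<in> W" using that by blast
    obtain f where f: "f \<in> M \<and> w \<in> f" and uniq: "\<forall>f'. f' \<in> M \<and> w \<in> f' \<longrightarrow> f' = f"
      using M(3)[rule_format, OF wW] by (rule ex1E)
    have "f \<noteq> e" using f that e_uv by blast
    then show ?thesis using f uniq by (intro ex1I[of _ f]) blast+
  qed
  have inside: "f \<subseteq> W - {u, v}" if "f \<in> M - {e}" for f
    using that M(2) uniq_u uniq_v' by blast
  show ?thesis unfolding has_perfect_matching_def
    by (intro exI[of _ "M - {e}"] conjI ballI) (erule inside unique | use M(1) in blast)+
qed

lemma has_perfect_matching_delta_chain:
  "(delta_step A)\<^sup>*\<^sup>* V W \<Longrightarrow> has_perfect_matching A (V - W)"
proof (induction rule: rtranclp_induct)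
  case base
  show ?case unfolding has_perfect_matching_def by auto
next
  case (step W1 W2)
  obtain u v where u: "u \<in> W1" and nb: "{w \<in> W1. adj A u w} = {v}" and W2: "W2 = W1 - {u, v}"
    using step(2) by (rule delta_stepE)
  have v: "v \<in> W1" "adj A u v" using nb by auto
  have "V - W2 = (V - W1) \<union> {u, v}" using delta_chain_subset[OF step(1)] u v(1) W2 by blast
  moreover have "has_perfect_matching A ((V - W1) \<union> {u, v})"
    by (rule has_perfect_matching_insert_edge[OF step(3) v(2)]) (use u v in blast)+
  ultimately show ?case by simp
qed

lemma has_perfect_matching_delta_chain_restrict:
  assumes "(delta_step A)\<^sup>*\<^sup>* V W" "C \<subseteq> W" "has_perfect_matching A (V - C)"
  shows "has_perfect_matching A (W - C)"
  using assms
proof (induction rule: rtranclp_induct)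
  case (step W1 W2)
  obtain u v where u: "u \<in> W1" and nb: "{w \<in> W1. adj A u w} = {v}" and W2: "W2 = W1 - {u, v}"
    using step(2) by (rule delta_stepE)
  have C: "C \<subseteq> W1" "u \<notin> C" using step.prems(1) W2 by auto
  have "has_perfect_matching A (W1 - C)" using step.IH C(1) step.prems(2) .
  moreover have "u \<in> W1 - C" "{w \<in> W1 - C. adj A u w} \<subseteq> {v}" using u C(2) nb by auto
  ultimately have "has_perfect_matching A (W1 - C - {u, v})" by (rule has_perfect_matching_remove_pendant)
  moreover have "W1 - C - {u, v} = W2 - C" using W2 by blast
  ultimately show ?case by simp
qed simp

lemma has_perfect_matching_edgeless:
  assumes "has_perfect_matching A W" "\<forall>u\<in>W. \<forall>w\<in>W. \<not> adj A u w"
  shows "W = {}"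
proof -
  obtain M where M: "M \<subseteq> edges A" "\<forall>e\<in>M. e \<subseteq> W" "\<forall>w\<in>W. \<exists>!e. e \<in> M \<and> w \<in> e"
    using assms(1) unfolding has_perfect_matching_def by blast
  have "e \<notin> M" for e
  proof
    assume "e \<in> M"
    then obtain a b where ab: "e = {a, b}" "adj A a b" using M(1) by (blast elim: edgeE)
    then have "a \<in> W" "b \<in> W" using M(2) \<open>e \<in> M\<close> by auto
    then show False using assms(2) ab(2) by blast
  qed
  then show ?thesis using M(3) by blast
qed

lemma delta_chain_reduces_to:
  assumes "(delta_step A)\<^sup>*\<^sup>* V W" "C \<subseteq> W" "\<forall>u\<in>W. \<forall>w\<in>W. adj A u w \<longrightarrow> u \<in> C \<and> w \<in> C"
    and "has_perfect_matching A (V - C)"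
  shows "W = C"
proof -
  have "has_perfect_matching A (W - C)"
    by (rule has_perfect_matching_delta_chain_restrict[OF assms(1,2,4)])
  then have "W - C = {}" by (rule has_perfect_matching_edgeless) (use assms(3) in blast)
  then show ?thesis using assms(2) by blast
qed

lemma delta_chain_to_empty_if_in_U1:
  assumes "in_U1 A" "has_perfect_matching A UNIV"
  shows "(delta_step A)\<^sup>*\<^sup>* UNIV {}"
proof -
  obtain W where W: "(delta_step A)\<^sup>*\<^sup>* UNIV W" "\<forall>u\<in>W. \<forall>w\<in>W. \<not> adj A u w"
    using assms(1) unfolding in_U1_def by blast
  have "\<forall>u\<in>W. \<forall>w\<in>W. adj A u w \<longrightarrow> u \<in> {} \<and> w \<in> {}" using W(2) by blast
  moreover have "has_perfect_matching A (UNIV - {})" using assms(2) by simp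
  ultimately have "W = {}" by (rule delta_chain_reduces_to[OF W(1) empty_subsetI])
  then show ?thesis using W(1) by simp
qed

lemma delta_chain_to_cycle_if_in_U2:
  assumes "in_U2 A c" "has_perfect_matching A (UNIV - set c)"
  shows "(delta_step A)\<^sup>*\<^sup>* UNIV (set c)"
proof -
  obtain W where W: "(delta_step A)\<^sup>*\<^sup>* UNIV W" "set c \<subseteq> W"
    "\<forall>u\<in>W. \<forall>w\<in>W. adj A u w \<longrightarrow> u \<in> set c \<and> w \<in> set c"
    using assms(1) unfolding in_U2_def by blast
  have "W = set c" by (rule delta_chain_reduces_to[OF W assms(2)])
  then show ?thesis using W(1) by simp
qed

section \<open>Cyclic sign recurrences\<close>

lemma prod_lessThan_add:
  fixes f :: "nat \<Rightarrow> 'a::comm_monoid_mult"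
  shows "(\<Prod>t<m + n. f t) = (\<Prod>t<m. f t) * (\<Prod>t<n. f (m + t))"
  by (induction n) (simp_all add: mult.assoc)

lemma prod_periodic_shift:
  fixes f :: "nat \<Rightarrow> 'a::comm_monoid_mult"
  assumes "\<And>n. f (n + k) = f n"
  shows "(\<Prod>t<k. f (j + t)) = (\<Prod>t<k. f t)"
proof (induction j)
  case (Suc j)
  show ?case
  proof (cases k)
    case (Suc k')
    have "(\<Prod>t<k. f (Suc j + t)) = (\<Prod>t<k'. f (j + Suc t)) * f (j + k)"
      using Suc by simp
    also have "\<dots> = f j * (\<Prod>t<k'. f (j + Suc t))" using assms by (simp add: mult.commute)
    also have "\<dots> = (\<Prod>t<k. f (j + t))" by (subst Suc, subst prod.lessThan_Suc_shift) simp
    finally show ?thesis using Suc.IH by simp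
  qed simp
qed simp

lemma periodic_mod:
  fixes f :: "nat \<Rightarrow> 'a"
  assumes "\<And>n. f (n + k) = f n"
  shows "f (n mod k) = f n"
proof -
  have "f (r + k * q) = f r" for r q
  proof (induction q)
    case (Suc q)
    have "r + k * Suc q = (r + k * q) + k" by simp
    then show ?case using assms Suc.IH by metis
  qed simp
  then show ?thesis by (metis mod_mult_div_eq mult.commute)
qed

lemma square_eq_1_of_abs_eq_1: "\<bar>a :: real\<bar> = 1 \<Longrightarrow> a * a = 1"
  by (metis abs_mult_self_eq mult_1)

lemma sign_recurrence_step:
  fixes s y :: "nat \<Rightarrow> real"
  assumes "\<bar>s (Suc n)\<bar> = 1" "s (Suc n) * y (n + 2) = s n * y n"
  shows "y (n + 2) = s n * s (Suc n) * y n"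
proof -
  have "y (n + 2) = (s (Suc n) * s (Suc n)) * y (n + 2)" using square_eq_1_of_abs_eq_1[OF assms(1)] by simp
  also have "\<dots> = s (Suc n) * (s n * y n)" by (simp only: mult.assoc assms(2))
  finally show ?thesis by (simp add: mult_ac)
qed

lemma sign_recurrence_iterate:
  fixes s y :: "nat \<Rightarrow> real"
  assumes "\<And>n. \<bar>s n\<bar> = 1" "\<And>n. s (Suc n) * y (n + 2) = s n * y n"
  shows "y (j + 2 * m) = (\<Prod>t<2 * m. s (j + t)) * y j"
proof (induction m)
  case (Suc m)
  have "y (j + 2 * m + 2) = s (j + 2 * m) * s (Suc (j + 2 * m)) * y (j + 2 * m)"
    using sign_recurrence_step[OF assms(1,2)] .
  then show ?case using Suc.IH by (simp add: mult_ac)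
qed simp

lemma periodic_sign_recurrence_trivial:
  fixes s y :: "nat \<Rightarrow> real"
  assumes "even k" "\<And>n. s (n + k) = s n" "\<And>n. y (n + k) = y n" "\<And>n. \<bar>s n\<bar> = 1"
    and "\<And>n. s (Suc n) * y (n + 2) = s n * y n" "(\<Prod>t<k. s t) \<noteq> 1"
  shows "y n = 0"
proof -
  have "y n = y (n + 2 * (k div 2))" using assms(1,3) by simp
  also have "\<dots> = (\<Prod>t<k. s (n + t)) * y n"
    using sign_recurrence_iterate[OF assms(4,5), of n "k div 2"] assms(1) by simp
  also have "(\<Prod>t<k. s (n + t)) = (\<Prod>t<k. s t)" by (rule prod_periodic_shift[where f = s, OF assms(2)])
  finally show ?thesis using assms(6) by simp
qed

text \<open>For sign product 1 the partial products at even positions close up around the cycle.\<close>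
lemma periodic_sign_recurrence_nontrivial:
  fixes s :: "nat \<Rightarrow> real"
  assumes "even k" "\<And>n. s (n + k) = s n" "\<And>n. \<bar>s n\<bar> = 1" "(\<Prod>t<k. s t) = 1"
  obtains y where "\<And>n. y (n + k) = y n" "\<And>n. s (Suc n) * y (n + 2) = s n * y n" "y 0 = 1"
proof
  define y where "y n = (if even n then \<Prod>t<n. s t else 0)" for n
  show "y (n + k) = y n" for n
    using assms(1,4) prod_periodic_shift[where f = s, OF assms(2)] by (simp add: y_def prod_lessThan_add)
  show "s (Suc n) * y (n + 2) = s n * y n" for n
    using square_eq_1_of_abs_eq_1[OF assms(3)] by (simp add: y_def mult_ac)
  show "y 0 = 1" by (simp add: y_def)
qed

lemma Suc_mod_cancel:
  fixes a b k :: nat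
  assumes "Suc a mod k = Suc b mod k"
  shows "a mod k = b mod k"
proof (cases "a \<le> b")
  case True
  then show ?thesis
    using assms mod_eq_dvd_iff_nat[of a b k] mod_eq_dvd_iff_nat[of "Suc a" "Suc b" k] by simp
next
  case False
  then show ?thesis
    using assms mod_eq_dvd_iff_nat[of b a k] mod_eq_dvd_iff_nat[of "Suc b" "Suc a" k] by simp
qed

lemma add_2_mod_neq:
  fixes n k :: nat
  assumes "3 \<le> k"
  shows "(n + 2) mod k \<noteq> n mod k"
proof
  assume "(n + 2) mod k = n mod k"
  then have "k dvd 2" by (simp add: mod_eq_dvd_iff_nat)
  then show False using assms by (auto dest: dvd_imp_le)
qed

section \<open>Oriented unicyclic graphs\<close>

locale oriented_unicyclic =
  fixes A :: "('n::finite \<times> 'n) set" and c :: "'n list"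
  assumes oriented: "oriented_graph A" and unicyclic: "unicyclic A" and cycle: "is_cycle A c"
begin

abbreviation k :: nat where "k \<equiv> length c"

text \<open>Cycle vertices indexed periodically, so that positions never need reducing modulo k.\<close>
definition cyc :: "nat \<Rightarrow> 'n" where
  "cyc i = c ! (i mod k)"

lemma length_ge_3: "3 \<le> k" and distinct_cycle: "distinct c"
  using cycle by (auto simp: is_cycle_def)

lemma length_pos: "0 < k"
  using length_ge_3 by linarith

lemma cyc_add_length: "cyc (i + k) = cyc i"
  by (simp add: cyc_def)

lemma cyc_eq_iff: "cyc i = cyc j \<longleftrightarrow> i mod k = j mod k"
  using distinct_cycle length_pos by (simp add: cyc_def nth_eq_iff_index_eq)

lemma set_cycle_eq_range_cyc: "set c = range cyc"
proof -
  have "c ! i = cyc i" if "i < k" for i using that by (simp add: cyc_def)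
  moreover have "cyc i \<in> set c" for i using length_pos by (simp add: cyc_def)
  ultimately show ?thesis by (auto simp: in_set_conv_nth)
qed

lemma adj_cyc_Suc: "adj A (cyc i) (cyc (Suc i))"
proof -
  have "adj A (c ! (i mod k)) (c ! ((i mod k + 1) mod k))"
    using cycle length_pos unfolding is_cycle_def by simp
  then show ?thesis by (simp add: cyc_def mod_Suc_eq)
qed

definition cycle_dist :: "'n \<Rightarrow> nat" where
  "cycle_dist v = (LEAST m. \<exists>s\<in>set c. (adj A ^^ m) s v)"

lemma cycle_dist_attained: "\<exists>s\<in>set c. (adj A ^^ cycle_dist v) s v"
proof -
  have "c ! 0 \<in> set c" using length_pos by simp
  moreover obtain m where "(adj A ^^ m) (c ! 0) v"
    using unicyclic unfolding unicyclic_def connected_graph_def rtranclp_power by blast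
  ultimately have "\<exists>m. \<exists>s\<in>set c. (adj A ^^ m) s v" by blast
  then show ?thesis unfolding cycle_dist_def by (rule LeastI_ex)
qed

lemma cycle_dist_le: "s \<in> set c \<Longrightarrow> (adj A ^^ m) s v \<Longrightarrow> cycle_dist v \<le> m"
  unfolding cycle_dist_def by (blast intro: Least_le)

lemma exists_parent:
  assumes "v \<notin> set c"
  shows "\<exists>p. adj A v p \<and> cycle_dist p + 1 = cycle_dist v"
proof -
  obtain s where s: "s \<in> set c" "(adj A ^^ cycle_dist v) s v" using cycle_dist_attained by blast
  then obtain m where m: "cycle_dist v = Suc m" using assms by (cases "cycle_dist v") auto
  obtain p where p: "(adj A ^^ m) s p" "adj A p v" using s(2) m by (auto elim: relpowp_Suc_E)
  obtain s' where s': "s' \<in> set c" "(adj A ^^ cycle_dist p) s' p" using cycle_dist_attained by blast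
  have "cycle_dist v \<le> Suc (cycle_dist p)" using cycle_dist_le[OF s'(1) relpowp_Suc_I[OF s'(2) p(2)]] .
  moreover have "cycle_dist p \<le> m" using cycle_dist_le[OF s(1) p(1)] .
  ultimately show ?thesis using m p(2) by (auto simp: adj_commute)
qed

definition parent :: "'n \<Rightarrow> 'n" where
  "parent v = (SOME p. adj A v p \<and> cycle_dist p + 1 = cycle_dist v)"

lemma parent_adj_closer: "v \<notin> set c \<Longrightarrow> adj A v (parent v) \<and> cycle_dist (parent v) + 1 = cycle_dist v"
  unfolding parent_def by (rule someI_ex, rule exists_parent)

definition cycle_edges :: "'n set set" where
  "cycle_edges = (\<lambda>i. {cyc i, cyc (Suc i)}) ` {..<k}"

definition tree_edges :: "'n set set" where
  "tree_edges = (\<lambda>v. {v, parent v}) ` (- set c)"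

lemma card_cycle_edges: "card cycle_edges = k"
proof -
  have "i = j" if "i < k" "j < k" "{cyc i, cyc (Suc i)} = {cyc j, cyc (Suc j)}" for i j
  proof -
    have "cyc i = cyc j \<or> (cyc i = cyc (Suc j) \<and> cyc (Suc i) = cyc j)"
      using that(3) by (auto simp: doubleton_eq_iff)
    moreover have "\<not> (cyc i = cyc (Suc j) \<and> cyc (Suc i) = cyc j)"
    proof
      assume "cyc i = cyc (Suc j) \<and> cyc (Suc i) = cyc j"
      then have "i mod k = Suc j mod k" "Suc i mod k = j mod k" by (simp_all add: cyc_eq_iff)
      then have "(i + 2) mod k = i mod k" by (metis add_2_eq_Suc' mod_Suc_eq)
      then show False using add_2_mod_neq[OF length_ge_3] by blast
    qed
    ultimately have "cyc i = cyc j" by blast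
    then show ?thesis using that(1,2) by (simp add: cyc_eq_iff)
  qed
  then have "inj_on (\<lambda>i. {cyc i, cyc (Suc i)}) {..<k}" by (intro inj_onI) blast
  then show ?thesis by (simp add: cycle_edges_def card_image)
qed

lemma card_tree_edges: "card tree_edges = CARD('n) - k"
proof -
  have "inj_on (\<lambda>v. {v, parent v}) (- set c)"
  proof (rule inj_onI)
    fix v w assume v: "v \<in> - set c" and w: "w \<in> - set c" and eq: "{v, parent v} = {w, parent w}"
    show "v = w"
    proof (rule ccontr)
      assume "v \<noteq> w"
      then have "v = parent w" "w = parent v" using eq by (auto simp: doubleton_eq_iff)
      then show False using parent_adj_closer[of v] parent_adj_closer[of w] v w by auto
    qed
  qed
  moreover have "card (- set c) = CARD('n) - k"
    using distinct_card[OF distinct_cycle] by (simp add: Compl_eq_Diff_UNIV card_Diff_subset)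
  ultimately show ?thesis by (simp add: tree_edges_def card_image)
qed

text \<open>Counting: the k cycle edges and the n - k parent edges are distinct edges, and there
  are only n edges, so every edge is one of them.\<close>
lemma edges_split:
  shows edges_within_cycle: "{e \<in> edges A. e \<subseteq> set c} = cycle_edges"
    and edges_leaving_cycle: "{e \<in> edges A. \<not> e \<subseteq> set c} = tree_edges"
proof -
  let ?E1 = "{e \<in> edges A. e \<subseteq> set c}" and ?E2 = "{e \<in> edges A. \<not> e \<subseteq> set c}"
  have sub1: "cycle_edges \<subseteq> ?E1"
    using adj_imp_edge[OF adj_cyc_Suc] by (auto simp: cycle_edges_def set_cycle_eq_range_cyc)
  have sub2: "tree_edges \<subseteq> ?E2"
    using adj_imp_edge parent_adj_closer by (fastforce simp: tree_edges_def)
  have "edges A = ?E1 \<union> ?E2" by blast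
  then have "card ?E1 + card ?E2 = CARD('n)"
    using card_Un_disjoint[of ?E1 ?E2] unicyclic unfolding unicyclic_def by fastforce
  moreover have "k \<le> card ?E1" "CARD('n) - k \<le> card ?E2"
    using card_mono[OF _ sub1] card_mono[OF _ sub2] card_cycle_edges card_tree_edges by auto
  moreover have "k \<le> CARD('n)"
    using distinct_card[OF distinct_cycle] card_mono[of UNIV "set c"] by simp
  ultimately have "card cycle_edges = card ?E1" "card tree_edges = card ?E2"
    using card_cycle_edges card_tree_edges by linarith+
  then show "?E1 = cycle_edges" "?E2 = tree_edges"
    using card_subset_eq[OF _ sub1] card_subset_eq[OF _ sub2] by auto
qed

lemma cycle_neighbours:
  assumes "v \<in> set c" "adj A (cyc (Suc j)) v"
  shows "v = cyc j \<or> v = cyc (Suc (Suc j))"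
proof -
  have "{cyc (Suc j), v} \<in> cycle_edges"
    using adj_imp_edge[OF assms(2)] assms(1) edges_within_cycle
    by (auto simp: set_cycle_eq_range_cyc)
  then obtain l where "{cyc (Suc j), v} = {cyc l, cyc (Suc l)}" by (auto simp: cycle_edges_def)
  then have "(Suc j mod k = l mod k \<and> v = cyc (Suc l)) \<or> (Suc j mod k = Suc l mod k \<and> v = cyc l)"
    by (auto simp: doubleton_eq_iff cyc_eq_iff)
  then show ?thesis by (metis Suc_mod_cancel cyc_eq_iff mod_Suc_eq)
qed

lemma tree_neighbours:
  assumes "w \<notin> set c" "adj A w y"
  shows "y = parent w \<or> (y \<notin> set c \<and> w = parent y)"
proof -
  have "{w, y} \<in> tree_edges" using adj_imp_edge[OF assms(2)] assms(1) edges_leaving_cycle by blast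
  then obtain x where "x \<notin> set c" "{w, y} = {x, parent x}" by (auto simp: tree_edges_def)
  then show ?thesis by (auto simp: doubleton_eq_iff)
qed

text \<open>A vertex off the cycle that is farthest from it has only its parent as a neighbour.\<close>
lemma two_neighbours_subset_cycle:
  assumes "\<forall>w\<in>W. \<exists>a\<in>W. \<exists>b\<in>W. a \<noteq> b \<and> adj A w a \<and> adj A w b"
  shows "W \<subseteq> set c"
proof (rule ccontr)
  assume "\<not> W \<subseteq> set c"
  then have "W - set c \<noteq> {}" by blast
  then have "Max (cycle_dist ` (W - set c)) \<in> cycle_dist ` (W - set c)" by (simp add: Max_in)
  then obtain w where w_max: "Max (cycle_dist ` (W - set c)) = cycle_dist w" and w: "w \<in> W - set c"
    by (rule imageE)
  have far: "cycle_dist y \<le> cycle_dist w" if "y \<in> W - set c" for y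
    unfolding w_max[symmetric] using that by simp
  have only_parent: "y = parent w" if "y \<in> W" "adj A w y" for y
  proof (rule ccontr)
    assume "y \<noteq> parent w"
    then have "y \<in> W - set c" "w = parent y" using tree_neighbours[of w y] that w by auto
    then have "cycle_dist w + 1 = cycle_dist y" using parent_adj_closer[of y] by simp
    then show False using far[OF \<open>y \<in> W - set c\<close>] by simp
  qed
  obtain a b where "a \<in> W" "b \<in> W" "a \<noteq> b" "adj A w a" "adj A w b" using assms w by blast
  then show False using only_parent by blast
qed

lemma two_neighbours_eq_cycle:
  assumes "\<forall>w\<in>W. \<exists>a\<in>W. \<exists>b\<in>W. a \<noteq> b \<and> adj A w a \<and> adj A w b" "W \<noteq> {}"
  shows "W = set c"
proof -
  have sub: "W \<subseteq> set c" using two_neighbours_subset_cycle[OF assms(1)] .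
  have next_in: "cyc (Suc (Suc j)) \<in> W" if j: "cyc (Suc j) \<in> W" for j
  proof -
    obtain a b where ab: "a \<in> W" "b \<in> W" "a \<noteq> b" "adj A (cyc (Suc j)) a" "adj A (cyc (Suc j)) b"
      using bspec[OF assms(1) j] by (elim bexE conjE)
    have "a \<in> set c" "b \<in> set c" using ab(1,2) sub by auto
    then have "a = cyc j \<or> a = cyc (Suc (Suc j))" "b = cyc j \<or> b = cyc (Suc (Suc j))"
      using cycle_neighbours ab(4,5) by simp_all
    then show ?thesis using ab(1-3) by auto
  qed
  obtain w where "w \<in> W" using assms(2) by blast
  then obtain i where i: "i < k" "c ! i \<in> W" using sub by (metis in_set_conv_nth subsetD)
  then have "cyc (Suc (i + k - 1)) \<in> W" using length_pos by (simp add: cyc_def)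
  then have along: "cyc (Suc (i + k - 1) + m) \<in> W" for m
    by (induction m) (simp_all add: next_in)
  have "cyc l \<in> W" for l
  proof -
    have shift: "Suc (i + k - 1) + (k - i + l) = l + k + k" using i(1) by simp
    have "cyc (l + k + k) \<in> W" using along[of "k - i + l"] by (simp only: shift)
    then show ?thesis by (simp only: cyc_add_length)
  qed
  then show ?thesis using sub by (auto simp: set_cycle_eq_range_cyc)
qed
lemma nonsingular_reduces_to_empty_or_cycle:
  assumes "skew_nonsingular_on A UNIV"
  obtains (empty) "(delta_step A)\<^sup>*\<^sup>* UNIV {}" | (cycle) "(delta_step A)\<^sup>*\<^sup>* UNIV (set c)"
proof -
  obtain W where W: "(delta_step A)\<^sup>*\<^sup>* UNIV W" and irreducible: "\<forall>u\<in>W. \<forall>v. {w \<in> W. adj A u w} \<noteq> {v}"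
    using delta_irreducible_reachable[OF finite_class.finite_UNIV, of A] by blast
  have "skew_nonsingular_on A W" using assms skew_nonsingular_on_delta_chain[OF W oriented] by simp
  then have "\<forall>w\<in>W. \<exists>a\<in>W. \<exists>b\<in>W. a \<noteq> b \<and> adj A w a \<and> adj A w b"
    using two_neighbours_of_nonsingular[OF _ finite irreducible] by blast
  then have "W = {} \<or> W = set c" using two_neighbours_eq_cycle by blast
  then show ?thesis using W empty cycle by blast
qed


definition cycle_sign :: "nat \<Rightarrow> real" where
  "cycle_sign i = skew_entry A (cyc i) (cyc (Suc i))"

lemma cycle_sign_add_length: "cycle_sign (i + k) = cycle_sign i"
  using cyc_add_length[of i] cyc_add_length[of "Suc i"] by (simp add: cycle_sign_def)

lemma abs_cycle_sign: "\<bar>cycle_sign i\<bar> = 1"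
  by (simp add: cycle_sign_def abs_skew_entry_adj adj_cyc_Suc)

lemma oddly_oriented_iff_cycle_sign:
  "oddly_oriented A c \<longleftrightarrow> even k \<and> (\<Prod>i<k. cycle_sign i) < 0"
proof -
  have "(\<Prod>i<k. cycle_sign i) = (\<Prod>i<k. skew_entry A (c ! i) (c ! ((i + 1) mod k)))"
    by (rule prod.cong) (simp_all add: cycle_sign_def cyc_def)
  then show ?thesis by (simp add: oddly_oriented_def)
qed

lemma prod_cycle_sign_cases: "(\<Prod>i<k. cycle_sign i) = 1 \<or> (\<Prod>i<k. cycle_sign i) = -1"
proof -
  have "\<bar>\<Prod>i<k. cycle_sign i\<bar> = 1" by (simp add: abs_prod abs_cycle_sign)
  then show ?thesis by linarith
qed

text \<open>The cycle has no chords, so this row only meets the two cycle neighbours.\<close>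
lemma cycle_row:
  "(\<Sum>v\<in>set c. skew_entry A (cyc (Suc j)) v * x v)
     = cycle_sign (Suc j) * x (cyc (Suc (Suc j))) - cycle_sign j * x (cyc j)"
proof -
  let ?g = "\<lambda>v. skew_entry A (cyc (Suc j)) v * x v"
  have ne: "cyc j \<noteq> cyc (Suc (Suc j))"
    using add_2_mod_neq[OF length_ge_3, of j] by (simp add: cyc_eq_iff)
  have in_c: "cyc j \<in> set c" "cyc (Suc (Suc j)) \<in> set c" by (simp_all add: set_cycle_eq_range_cyc)
  have "?g v = 0" if "v \<in> set c - {cyc j, cyc (Suc (Suc j))}" for v
  proof -
    have "\<not> adj A (cyc (Suc j)) v" using that cycle_neighbours[of v j] by blast
    then show ?thesis by (simp add: skew_entry_eq_0_iff[OF oriented])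
  qed
  then have "(\<Sum>v\<in>set c. ?g v) = (\<Sum>v\<in>{cyc j, cyc (Suc (Suc j))}. ?g v)"
    using in_c by (intro sum.mono_neutral_right) auto
  also have "\<dots> = ?g (cyc j) + ?g (cyc (Suc (Suc j)))" using ne by simp
  also have "skew_entry A (cyc (Suc j)) (cyc j) = - cycle_sign j"
    unfolding cycle_sign_def by (rule skew_entry_antisym[OF oriented])
  finally show ?thesis by (simp add: cycle_sign_def)
qed

lemma cycle_kernel_recurrence:
  assumes "\<forall>i\<in>set c. (\<Sum>v\<in>set c. skew_entry A i v * x v) = 0"
  shows "cycle_sign (Suc n) * x (cyc (n + 2)) = cycle_sign n * x (cyc n)"
proof -
  have "cyc (Suc n) \<in> set c" by (simp add: set_cycle_eq_range_cyc)
  then show ?thesis using bspec[OF assms] cycle_row[of n x] by simp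
qed

lemma skew_nonsingular_on_cycle_if_oddly_oriented:
  assumes "oddly_oriented A c"
  shows "skew_nonsingular_on A (set c)"
  unfolding skew_nonsingular_on_def
proof (intro allI impI ballI)
  fix x v
  assume kernel: "\<forall>i\<in>set c. (\<Sum>j\<in>set c. skew_entry A i j * x j) = 0" and "v \<in> set c"
  then obtain n where v: "v = cyc n" by (auto simp: set_cycle_eq_range_cyc)
  have "(\<Prod>i<k. cycle_sign i) \<noteq> 1" using assms by (simp add: oddly_oriented_iff_cycle_sign)
  then have "(\<lambda>n. x (cyc n)) n = 0"
    using assms cycle_sign_add_length abs_cycle_sign cycle_kernel_recurrence[OF kernel]
    by (intro periodic_sign_recurrence_trivial[where k = k and s = cycle_sign])
       (simp_all add: oddly_oriented_iff_cycle_sign cyc_add_length)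
  then show "x v = 0" by (simp add: v)
qed

lemma skew_singular_on_cycle_if_not_oddly_oriented:
  assumes "even k" "\<not> oddly_oriented A c"
  shows "\<not> skew_nonsingular_on A (set c)"
proof
  assume nonsingular: "skew_nonsingular_on A (set c)"
  have "(\<Prod>i<k. cycle_sign i) = 1"
    using assms prod_cycle_sign_cases by (auto simp: oddly_oriented_iff_cycle_sign)
  then obtain y where y_periodic: "\<And>n. y (n + k) = y n"
    and y_rec: "\<And>n. cycle_sign (Suc n) * y (n + 2) = cycle_sign n * y n" and "y 0 = 1"
    using periodic_sign_recurrence_nontrivial[where s = cycle_sign, OF assms(1) cycle_sign_add_length
        abs_cycle_sign] by blast
  define x where "x v = y (SOME n. v = cyc n)" for v
  have x_cyc: "x (cyc n) = y n" for n
  proof -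
    have "cyc n = cyc (SOME m. cyc n = cyc m)" by (rule someI) (rule refl)
    then show ?thesis unfolding x_def cyc_eq_iff by (metis periodic_mod y_periodic)
  qed
  have "\<forall>i\<in>set c. (\<Sum>v\<in>set c. skew_entry A i v * x v) = 0"
  proof
    fix i assume "i \<in> set c"
    then obtain n where "i = cyc n" by (auto simp: set_cycle_eq_range_cyc)
    moreover have "Suc (n + k - 1) = n + k" using length_pos by simp
    ultimately have "i = cyc (Suc (n + k - 1))" by (simp add: cyc_add_length)
    then show "(\<Sum>v\<in>set c. skew_entry A i v * x v) = 0"
      using y_rec by (simp add: cycle_row x_cyc)
  qed
  then have "x (cyc 0) = 0" using nonsingular unfolding skew_nonsingular_on_def
    by (simp add: set_cycle_eq_range_cyc)
  then show False using \<open>y 0 = 1\<close> by (simp add: x_cyc)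
qed

lemma skew_nonsingular_on_cycle_iff:
  "even k \<Longrightarrow> skew_nonsingular_on A (set c) \<longleftrightarrow> oddly_oriented A c"
  using skew_nonsingular_on_cycle_if_oddly_oriented skew_singular_on_cycle_if_not_oddly_oriented
  by blast

end

theorem theorem5p2:
  fixes A :: "('n::finite \<times> 'n) set" and c :: "'n list"
  assumes "oriented_graph A"
    and "unicyclic A"
    and "even CARD('n)"
    and "is_cycle A c"
  shows "det (skew_adj A) \<noteq> 0 \<longleftrightarrow>
    ((in_U1 A \<and> has_perfect_matching A UNIV) \<or>
     (in_U2 A c \<and> oddly_oriented A c \<and> has_perfect_matching A (UNIV - set c)))"
proof -
  interpret oriented_unicyclic A c using assms by unfold_locales
  have reduce: "skew_nonsingular_on A UNIV \<longleftrightarrow> skew_nonsingular_on A W"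
    if "(delta_step A)\<^sup>*\<^sup>* UNIV W" for W
    using skew_nonsingular_on_delta_chain[OF that oriented] .
  show ?thesis unfolding det_skew_adj_nonzero_iff
  proof
    assume nonsingular: "skew_nonsingular_on A UNIV"
    then show "(in_U1 A \<and> has_perfect_matching A UNIV) \<or>
      (in_U2 A c \<and> oddly_oriented A c \<and> has_perfect_matching A (UNIV - set c))"
    proof (cases rule: nonsingular_reduces_to_empty_or_cycle)
      case empty
      then show ?thesis using has_perfect_matching_delta_chain[OF empty] by (auto simp: in_U1_def)
    next
      case cycle
      have "even k"
        using delta_chain_even_card[OF cycle oriented] assms(3) distinct_card[OF distinct_cycle] by simp
      then have "oddly_oriented A c"
        using nonsingular reduce[OF cycle] skew_nonsingular_on_cycle_iff by simp
      then show ?thesis using has_perfect_matching_delta_chain[OF cycle] cycle by (auto simp: in_U2_def)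
    qed
  next
    assume "(in_U1 A \<and> has_perfect_matching A UNIV) \<or>
      (in_U2 A c \<and> oddly_oriented A c \<and> has_perfect_matching A (UNIV - set c))"
    then show "skew_nonsingular_on A UNIV"
    proof
      assume "in_U1 A \<and> has_perfect_matching A UNIV"
      then show ?thesis
        using reduce[OF delta_chain_to_empty_if_in_U1] by (simp add: skew_nonsingular_on_def)
    next
      assume "in_U2 A c \<and> oddly_oriented A c \<and> has_perfect_matching A (UNIV - set c)"
      then show ?thesis
        using reduce[OF delta_chain_to_cycle_if_in_U2] skew_nonsingular_on_cycle_if_oddly_oriented by blast
    qed
  qed
qed

end
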